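(* Assume (A1)–(A4), let $x_1\in R\mathbb{B}$, and run the Algorithm with $\eta>0$ and $\rho\in[0,\epsilon]$. Let $x_\rho^\star\in\arg\min_{x\in\mathcal{X}_\rho}\sum_{t=1}^Tf_t(x)$. Then $$\sum_{t=1}^T\big(f_t(x_t)-f_t(x_\rho^\star)\big)\le\frac{2R^2}{\eta}+\frac{\eta}{2}G_f^2T .$$
   Context: Let $d,T$ be positive integers and $[T]=\{1,\dots,T\}$. Write $\|\cdot\|$ for the Euclidean norm and $\mathbb{B}=\{x\in\mathbb{R}^d:\|x\|\le1\}$. For a closed convex set $\mathcal{Y}$, $\Pi_{\mathcal{Y}}$ is the Euclidean projection onto $\mathcal{Y}$. For $a\in\mathbb{R}$, $[a]_+=\max(a,0)$. Let $g:\mathbb{R}^d\to\mathbb{R}$ be convex with subdifferential $\partial g(x)$. Set $\mathcal{X}=\{x:g(x)\le0\}$, and for $\rho\ge0$ set $\mathcal{X}_\rho=\{x:g(x)\le-\rho\}$. Assumptions: (A1) there is $R>0$ with $\mathcal{X}\subseteq R\mathbb{B}$; (A2) $f_1,\dots,f_T:\mathbb{R}^d\to\mathbb{R}$ are convex and differentiable, and there is $G_f>0$ with $\|\nabla f_t(x)\|\le G_f$ for all $x\in R\mathbb{B}$ and all $t\in[T]$; (A3) there is $G_g>0$ with $\|s\|\le G_g$ for all $s\in\partial g(x)$ and all $x\in R\mathbb{B}$; (A4) there are $\sigma,\epsilon>0$ such that $\mathcal{X}'=\{x:g(x)=-\epsilon\}$ is nonempty and $\|s\|\ge\sigma$ for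 all $s\in\partial g(x)$ and all $x\in\mathcal{X}'$. Algorithm (OGD with Polyak feasibility steps). Inputs are $x_1\in\mathbb{R}^d$, $\eta>0$ and $\rho\ge0$. For $t=1,\dots,T$: - play $x_t$ and then receive $f_t$; the functions may be chosen adversarially and may depend on past actions; - query $g_t=g(x_t)$ and some $s_t\in\partial g(x_t)$; - set $y_t=x_t-\eta\nabla f_t(x_t)$; - if $s_t\ne0$, set $x_{t+1}=\Pi_{R\mathbb{B}}\big(y_t-\frac{[g_t+s_t^\top(y_t-x_t)+\rho]_+}{\|s_t\|^2}s_t\big)$; if $s_t=0$, set $x_{t+1}=\Pi_{R\mathbb{B}}(y_t)$. *)

theory Defs
  imports "HOL-Analysis.Analysis"
begin

definition subdiff :: "('a::real_inner \<Rightarrow> real) \<Rightarrow> 'a \<Rightarrow> 'a set" where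
  "subdiff g x = {s. \<forall>y. g y \<ge> g x + inner s (y - x)}"

definition polyak_step ::
  "real \<Rightarrow> real \<Rightarrow> real \<Rightarrow> ('a::euclidean_space \<Rightarrow> real) \<Rightarrow> 'a \<Rightarrow> 'a \<Rightarrow> 'a \<Rightarrow> 'a" where
  "polyak_step R \<eta> \<rho> g s gradf x =
     (let y = x - \<eta> *\<^sub>R gradf in
      closest_point (cball 0 R)
        (if s \<noteq> 0
         then y - (max (g x + inner s (y - x) + \<rho>) 0 / (norm s)\<^sup>2) *\<^sub>R s
         else y))"

end

theory Submission
  imports Defs
begin

text \<open>Both the gradient step and the Polyak step towards the linearised constraint halfspace,
  as well as the final projection onto \<open>cball 0 R\<close>, do not increase the distance to any
  comparator \<open>w\<close> with \<open>g w \<le> -\<rho>\<close>: by the subgradient inequality, \<open>w\<close> lies in that halfspace,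
  and \<open>w \<in> cball 0 R\<close> by (A1). Hence the usual online gradient descent analysis applies verbatim:
  convexity of \<open>f\<^sub>t\<close> bounds the instantaneous regret by \<open>\<langle>\<nabla>f\<^sub>t(x\<^sub>t), x\<^sub>t - w\<rangle>\<close>, which in turn is
  bounded by the decrease of \<open>\<parallel>x\<^sub>t - w\<parallel>\<^sup>2/(2\<eta>)\<close> plus \<open>\<eta>G\<^sub>f\<^sup>2/2\<close>, and the sum telescopes. The bound thus
  holds for every such comparator.\<close>

lemma convex_on_line:
  fixes F :: "'a::real_vector \<Rightarrow> real"
  assumes "convex_on UNIV F"
  shows "convex_on UNIV (\<lambda>t::real. F (z + t *\<^sub>R v))"
proof (rule convex_onI)
  fix u a b :: real
  assume u: "0 < u" "u < 1"
  have "z + ((1 - u) *\<^sub>R a + u *\<^sub>R b) *\<^sub>R v = (1 - u) *\<^sub>R (z + a *\<^sub>R v) + u *\<^sub>R (z + b *\<^sub>R v)"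
    by (simp add: algebra_simps)
  then show "F (z + ((1 - u) *\<^sub>R a + u *\<^sub>R b) *\<^sub>R v) \<le> (1 - u) * F (z + a *\<^sub>R v) + u * F (z + b *\<^sub>R v)"
    using convex_onD[OF assms, of u] u by simp
qed simp

lemma convex_has_derivative_imp_above_tangent:
  fixes F :: "'a::real_inner \<Rightarrow> real"
  assumes convex: "convex_on UNIV F"
    and deriv: "(F has_derivative (\<lambda>h. inner d h)) (at z)"
  shows "F z + inner d (y - z) \<le> F y"
proof -
  define \<phi> where "\<phi> = (\<lambda>t::real. F (z + t *\<^sub>R (y - z)))"
  have "convex_on UNIV \<phi>"
    unfolding \<phi>_def using convex by (rule convex_on_line)
  have line: "((\<lambda>t::real. z + t *\<^sub>R (y - z)) has_derivative (\<lambda>h. h *\<^sub>R (y - z))) (at 0)"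
    by (auto intro!: derivative_eq_intros)
  have "(F has_derivative (\<lambda>h. inner d h)) (at (z + 0 *\<^sub>R (y - z)))"
    using deriv by simp
  from has_derivative_compose[OF line this]
  have "(\<phi> has_derivative (\<lambda>h. inner d (h *\<^sub>R (y - z)))) (at 0)"
    unfolding \<phi>_def by simp
  moreover have "(\<lambda>h. inner d (h *\<^sub>R (y - z))) = (*) (inner d (y - z))"
    by auto
  ultimately have "(\<phi> has_field_derivative inner d (y - z)) (at 0 within UNIV)"
    by (simp add: has_field_derivative_def)
  from convex_on_imp_above_tangent[OF \<open>convex_on UNIV \<phi>\<close> _ _ _ this, of 1]
  show ?thesis
    unfolding \<phi>_def by simp
qed

lemma power2_norm_diff_scaleR:
  fixes a b :: "'a::real_inner"
  shows "(norm (a - l *\<^sub>R b))\<^sup>2 = (norm a)\<^sup>2 - 2 * l * inner b a + l\<^sup>2 * (norm b)\<^sup>2"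
  unfolding power2_norm_eq_inner
  by (simp add: inner_diff_left inner_diff_right inner_commute[of a b] algebra_simps power2_eq_square)

lemma halfspace_step_dist_le:
  fixes v p w y :: "'a::real_inner"
  assumes w: "c + inner v (w - p) \<le> 0"
  shows "norm (y - (max (c + inner v (y - p)) 0 / (norm v)\<^sup>2) *\<^sub>R v - w) \<le> norm (y - w)"
proof (cases "c + inner v (y - p) \<le> 0")
  case True
  then show ?thesis by simp
next
  case False
  define h where "h = c + inner v (y - p)"
  define l where "l = h / (norm v)\<^sup>2"
  have "h > 0"
    using False h_def by simp
  moreover have "v \<noteq> 0"
    using False w by auto
  ultimately have l: "l \<ge> 0" "l * (norm v)\<^sup>2 = h"
    by (simp_all add: l_def)
  have "h \<le> inner v (y - w)"
    using w by (simp add: h_def inner_diff_right)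
  then have "l * h \<le> l * inner v (y - w)"
    using l(1) by (rule mult_left_mono)
  then have "(norm ((y - w) - l *\<^sub>R v))\<^sup>2 \<le> (norm (y - w))\<^sup>2 - l * h"
    using l(2) unfolding power2_norm_diff_scaleR by (simp add: power2_eq_square algebra_simps)
  also have "\<dots> \<le> (norm (y - w))\<^sup>2"
    using l(1) \<open>h > 0\<close> by simp
  finally have "(norm ((y - w) - l *\<^sub>R v))\<^sup>2 \<le> (norm (y - w))\<^sup>2" .
  then have "norm ((y - w) - l *\<^sub>R v) \<le> norm (y - w)"
    by (rule power2_le_imp_le) simp
  then show ?thesis
    using False by (simp add: h_def l_def algebra_simps)
qed

lemma polyak_step_in_cball:
  assumes "R \<ge> 0"
  shows "polyak_step R \<eta> \<rho> g s d x \<in> cball 0 R"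
  unfolding polyak_step_def Let_def
  using assms by (intro closest_point_in_set) auto

lemma polyak_step_dist_le:
  fixes g :: "'a::euclidean_space \<Rightarrow> real"
  assumes s: "s \<in> subdiff g x" and w: "g w \<le> - \<rho>" "w \<in> cball 0 R"
  shows "norm (polyak_step R \<eta> \<rho> g s d x - w) \<le> norm (x - \<eta> *\<^sub>R d - w)"
proof -
  define y where "y = x - \<eta> *\<^sub>R d"
  have "R \<ge> 0"
    using w(2) by (auto dest: order_trans[OF norm_ge_zero])
  then have proj: "norm (closest_point (cball 0 R) z - w) \<le> norm (z - w)" for z
    using closest_point_lipschitz[of "cball 0 R" z w] closest_point_self[OF w(2)]
    by (simp add: dist_norm)
  have "g x + inner s (w - x) \<le> g w"
    using s unfolding subdiff_def by blast
  then have "(g x + \<rho>) + inner s (w - x) \<le> 0"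
    using w(1) by simp
  from halfspace_step_dist_le[OF this, of y]
  have "norm (y - (max (g x + inner s (y - x) + \<rho>) 0 / (norm s)\<^sup>2) *\<^sub>R s - w) \<le> norm (y - w)"
    by (simp add: add_ac)
  then show ?thesis
    using proj[of y] proj[of "y - _ *\<^sub>R s"]
    unfolding polyak_step_def Let_def y_def[symmetric]
    by (cases "s = 0") (auto intro: order_trans)
qed

lemma gradient_step_regret_le:
  fixes F :: "'a::real_inner \<Rightarrow> real"
  assumes convex: "convex_on UNIV F"
    and deriv: "(F has_derivative (\<lambda>h. inner d h)) (at x)"
    and eta: "\<eta> > 0"
    and next_dist: "norm (x' - w) \<le> norm (x - \<eta> *\<^sub>R d - w)"
  shows "F x - F w \<le> ((norm (x - w))\<^sup>2 - (norm (x' - w))\<^sup>2) / (2 * \<eta>) + \<eta> / 2 * (norm d)\<^sup>2"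
proof -
  have "F x - F w \<le> inner d (x - w)"
    using convex_has_derivative_imp_above_tangent[OF convex deriv, of w]
    by (simp add: inner_diff_right)
  moreover have "(norm (x' - w))\<^sup>2 \<le> (norm ((x - w) - \<eta> *\<^sub>R d))\<^sup>2"
    using next_dist by (simp add: power_mono algebra_simps)
  then have "2 * \<eta> * inner d (x - w) \<le> (norm (x - w))\<^sup>2 - (norm (x' - w))\<^sup>2 + \<eta>\<^sup>2 * (norm d)\<^sup>2"
    unfolding power2_norm_diff_scaleR by linarith
  then have "inner d (x - w) \<le> ((norm (x - w))\<^sup>2 - (norm (x' - w))\<^sup>2) / (2 * \<eta>) + \<eta> / 2 * (norm d)\<^sup>2"
    using eta by (simp add: field_simps power2_eq_square)
  ultimately show ?thesis
    by linarith
qed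

lemma telescoping_regret_le:
  fixes r D :: "nat \<Rightarrow> real"
  assumes step: "\<And>t. t \<in> {1..T} \<Longrightarrow> r t \<le> (D t - D (Suc t)) / (2 * \<eta>) + c"
    and eta: "\<eta> > 0"
    and bounds: "D 1 \<le> B" "D (Suc T) \<ge> 0"
  shows "(\<Sum>t=1..T. r t) \<le> B / (2 * \<eta>) + c * real T"
proof -
  have telescope: "(\<Sum>t=1..T. D t - D (Suc t)) = D 1 - D (Suc T)"
    using sum_Suc_diff[of 1 T "\<lambda>t. - D t"] by simp
  have "(\<Sum>t=1..T. r t) \<le> (\<Sum>t=1..T. (D t - D (Suc t)) / (2 * \<eta>) + c)"
    by (rule sum_mono) (rule step)
  also have "\<dots> = (\<Sum>t=1..T. D t - D (Suc t)) / (2 * \<eta>) + c * real T"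
    by (simp add: sum.distrib sum_divide_distrib)
  also have "\<dots> = (D 1 - D (Suc T)) / (2 * \<eta>) + c * real T"
    by (simp only: telescope)
  also have "\<dots> \<le> B / (2 * \<eta>) + c * real T"
    using bounds eta by (simp add: divide_right_mono)
  finally show ?thesis .
qed

theorem mainTheorem9:
  fixes g :: "'a::euclidean_space \<Rightarrow> real"
    and f :: "nat \<Rightarrow> 'a \<Rightarrow> real"
    and grad :: "nat \<Rightarrow> 'a \<Rightarrow> 'a"
    and x s :: "nat \<Rightarrow> 'a"
    and xstar :: 'a
    and T :: nat
    and R G\<^sub>f G\<^sub>g \<sigma> \<epsilon> \<eta> \<rho> :: real
  assumes T_pos: "T > 0"
    and g_convex: "convex_on UNIV g"
    and A1: "R > 0" "{x. g x \<le> 0} \<subseteq> cball 0 R"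
    and A2_convex: "\<And>t. t \<in> {1..T} \<Longrightarrow> convex_on UNIV (f t)"
    and A2_grad: "\<And>t z. t \<in> {1..T} \<Longrightarrow> (f t has_derivative (\<lambda>h. inner (grad t z) h)) (at z)"
    and A2_bound: "G\<^sub>f > 0" "\<And>t z. t \<in> {1..T} \<Longrightarrow> z \<in> cball 0 R \<Longrightarrow> norm (grad t z) \<le> G\<^sub>f"
    and A3: "G\<^sub>g > 0" "\<And>z v. z \<in> cball 0 R \<Longrightarrow> v \<in> subdiff g z \<Longrightarrow> norm v \<le> G\<^sub>g"
    and A4: "\<sigma> > 0" "\<epsilon> > 0" "{z. g z = - \<epsilon>} \<noteq> {}"
      "\<And>z v. g z = - \<epsilon> \<Longrightarrow> v \<in> subdiff g z \<Longrightarrow> norm v \<ge> \<sigma>"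
    and x1: "x 1 \<in> cball 0 R"
    and eta: "\<eta> > 0"
    and rho: "0 \<le> \<rho>" "\<rho> \<le> \<epsilon>"
    and subgrad: "\<And>t. t \<in> {1..T} \<Longrightarrow> s t \<in> subdiff g (x t)"
    and update: "\<And>t. t \<in> {1..T} \<Longrightarrow>
                   x (Suc t) = polyak_step R \<eta> \<rho> g (s t) (grad t (x t)) (x t)"
    and xstar_feas: "g xstar \<le> - \<rho>"
    and xstar_min: "\<And>z. g z \<le> - \<rho> \<Longrightarrow> (\<Sum>t=1..T. f t xstar) \<le> (\<Sum>t=1..T. f t z)"
  shows "(\<Sum>t=1..T. f t (x t) - f t xstar) \<le> 2 * R\<^sup>2 / \<eta> + \<eta> / 2 * G\<^sub>f\<^sup>2 * real T"
proof -
  have "g xstar \<le> 0"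
    using xstar_feas rho(1) by linarith
  then have xstar_in: "xstar \<in> cball 0 R"
    using A1(2) by blast
  have x_in: "t \<in> {1..T} \<Longrightarrow> x t \<in> cball 0 R" for t
    using x1 update polyak_step_in_cball[of R] A1(1)
    by (cases t) (auto simp: le_Suc_eq)
  define D where "D t = (norm (x t - xstar))\<^sup>2" for t
  have "f t (x t) - f t xstar \<le> (D t - D (Suc t)) / (2 * \<eta>) + \<eta> / 2 * G\<^sub>f\<^sup>2"
    if t: "t \<in> {1..T}" for t
  proof -
    have "norm (x (Suc t) - xstar) \<le> norm (x t - \<eta> *\<^sub>R grad t (x t) - xstar)"
      using update[OF t] polyak_step_dist_le[OF subgrad[OF t] xstar_feas xstar_in] by simp
    note regret = gradient_step_regret_le[OF A2_convex[OF t] A2_grad[OF t] eta this]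
    have "(norm (grad t (x t)))\<^sup>2 \<le> G\<^sub>f\<^sup>2"
      using A2_bound(2)[OF t x_in[OF t]] by (simp add: power_mono)
    then have "\<eta> / 2 * (norm (grad t (x t)))\<^sup>2 \<le> \<eta> / 2 * G\<^sub>f\<^sup>2"
      using eta by (intro mult_left_mono) auto
    with regret show ?thesis
      unfolding D_def by linarith
  qed
  moreover have "D 1 \<le> (2 * R)\<^sup>2"
    using norm_triangle_ineq4[of "x 1" xstar] x1 xstar_in
    unfolding D_def by (intro power_mono) auto
  ultimately have "(\<Sum>t=1..T. f t (x t) - f t xstar) \<le> (2 * R)\<^sup>2 / (2 * \<eta>) + \<eta> / 2 * G\<^sub>f\<^sup>2 * real T"
    using eta by (intro telescoping_regret_le[where D = D]) (simp_all add: D_def)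
  then show ?thesis
    by (simp add: power2_eq_square)
qed

end
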